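(* Let $(\sigma_N)_{N \geq 1}$ be a sequence such that $\sigma_N$ is a permutation of $\{1,\dots,N\}$ for every $N \geq 1$, and such that for every $N \geq 1$, $\sigma_N$ is obtained by removing the element $N+1$ from the cycle structure of $\sigma_{N+1}$. For every finite subset $I \subset \mathbb{N}^* = \{1,2,\dots\}$ and every integer $N \geq \max I$, let $\sigma^{(N)}_I$ be the permutation of $I$ obtained by removing the elements of $\{1,\dots,N\} \setminus I$ from the cycle structure of $\sigma_N$. Then $\sigma^{(N)}_I$ does not depend on the choice of $N \geq \max I$; writing $\sigma_I := \sigma^{(N)}_I$, for all finite subsets $I \subset J$ of $\mathbb{N}^*$, the permutation $\sigma_I$ is obtained from the cycle structure of $\sigma_J$ by removing the elements of $J \setminus I$.
   Context: For finite sets $I \subset J$ and a permutation $\tau$ of $J$, "removing the elements of $J \setminus I$ from the cycle structure of $\tau$" means forming the permutation $\pi$ of $I$ given by $\pi(x) = \tau^m(x)$, where $m \geq 1$ is the smallest integer such that $\tau^m(x) \in I$. *)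

theory Defs
  imports "HOL-Combinatorics.Permutations"
begin

text \<open>Removing the elements of J - I from the cycle structure of a permutation tau of J:
  pi(x) = tau^m(x) with m >= 1 least such that tau^m(x) is in I (identity outside I,
  following the convention of the permutes predicate).\<close>
definition remove_from_cycles :: "(nat \<Rightarrow> nat) \<Rightarrow> nat set \<Rightarrow> nat \<Rightarrow> nat" where
  "remove_from_cycles \<tau> I x =
     (if x \<in> I then (\<tau> ^^ (LEAST m. m \<ge> 1 \<and> (\<tau> ^^ m) x \<in> I)) x else x)"

end

theory Submission
  imports Defs
begin

text \<open>Removal is transitive: for \<open>I \<subseteq> J\<close> and \<open>x \<in> I\<close>, the \<open>\<tau>\<close>-path from \<open>x\<close> to its
  first return to \<open>I\<close> meets \<open>J\<close> finitely often, and the permutation obtained by removing the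
  complement of \<open>J\<close> steps exactly along these visits, so both reach \<open>I\<close> at the same point.
  Iterating the compatibility of consecutive \<open>\<sigma> N\<close> with this shows that \<open>\<sigma> N\<close> is obtained
  from \<open>\<sigma> N'\<close> (\<open>N \<le> N'\<close>) by removing \<open>{N+1..N'}\<close>; transitivity then gives both claims.\<close>

definition first_hit :: "('a \<Rightarrow> 'a) \<Rightarrow> 'a set \<Rightarrow> 'a \<Rightarrow> nat \<Rightarrow> bool" where
  "first_hit f A x m \<longleftrightarrow> m \<ge> 1 \<and> (f ^^ m) x \<in> A \<and> (\<forall>j. 1 \<le> j \<and> j < m \<longrightarrow> (f ^^ j) x \<notin> A)"

definition hitting_time :: "('a \<Rightarrow> 'a) \<Rightarrow> 'a set \<Rightarrow> 'a \<Rightarrow> nat" where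
  "hitting_time f A x = (LEAST m. m \<ge> 1 \<and> (f ^^ m) x \<in> A)"

lemma remove_from_cycles_hitting_time:
  "x \<in> I \<Longrightarrow> remove_from_cycles \<tau> I x = (\<tau> ^^ hitting_time \<tau> I x) x"
  by (simp add: remove_from_cycles_def hitting_time_def)

lemma first_hit_hitting_time:
  assumes "n \<ge> 1" "(f ^^ n) x \<in> A"
  shows "first_hit f A x (hitting_time f A x)" and "hitting_time f A x \<le> n"
proof -
  have "hitting_time f A x \<ge> 1 \<and> (f ^^ hitting_time f A x) x \<in> A"
    unfolding hitting_time_def by (rule LeastI[of _ n]) (use assms in simp)
  then show "first_hit f A x (hitting_time f A x)"
    unfolding first_hit_def hitting_time_def using not_less_Least by blast
  show "hitting_time f A x \<le> n"
    unfolding hitting_time_def by (rule Least_le) (use assms in simp)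
qed

lemma hitting_time_eq:
  assumes "first_hit f A x m"
  shows "hitting_time f A x = m"
proof -
  have "m \<ge> 1" "(f ^^ m) x \<in> A"
    using assms unfolding first_hit_def by auto
  then have "first_hit f A x (hitting_time f A x)"
    by (rule first_hit_hitting_time)
  with assms show ?thesis
    unfolding first_hit_def by (meson linorder_neqE_nat)
qed

lemma remove_from_cycles_first_hit:
  "x \<in> I \<Longrightarrow> first_hit \<tau> I x m \<Longrightarrow> remove_from_cycles \<tau> I x = (\<tau> ^^ m) x"
  by (simp add: remove_from_cycles_hitting_time hitting_time_eq)

lemma first_hit_remove_from_cycles:
  assumes "I \<subseteq> J" "x \<in> J" "first_hit \<tau> I x m"
  shows "\<exists>k. first_hit (remove_from_cycles \<tau> J) I x k
           \<and> (remove_from_cycles \<tau> J ^^ k) x = (\<tau> ^^ m) x"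
  using assms(2,3)
proof (induction m arbitrary: x rule: less_induct)
  case (less m x)
  let ?\<pi> = "remove_from_cycles \<tau> J"
  define m' where "m' = hitting_time \<tau> J x"
  have m: "m \<ge> 1" "(\<tau> ^^ m) x \<in> I" "\<And>j. 1 \<le> j \<Longrightarrow> j < m \<Longrightarrow> (\<tau> ^^ j) x \<notin> I"
    using less.prems(2) unfolding first_hit_def by auto
  then have m': "first_hit \<tau> J x m'" "m' \<le> m"
    unfolding m'_def using assms(1) by (auto intro: first_hit_hitting_time)
  have \<pi>x: "?\<pi> x = (\<tau> ^^ m') x"
    using remove_from_cycles_first_hit[OF less.prems(1) m'(1)] .
  show ?case
  proof (cases "m' = m")
    case True
    then show ?thesis
      using m(1) \<pi>x less.prems(2) unfolding first_hit_def by (intro exI[of _ 1]) auto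
  next
    case False
    define y where "y = (\<tau> ^^ m') x"
    have shift: "(\<tau> ^^ j) y = (\<tau> ^^ (j + m')) x" for j
      by (simp add: y_def funpow_add)
    have "m' < m" "m' \<ge> 1" "y \<in> J"
      using False m' unfolding first_hit_def y_def by auto
    have "y \<notin> I"
      using m(3)[of m'] \<open>m' < m\<close> \<open>m' \<ge> 1\<close> by (simp add: y_def)
    have "first_hit \<tau> I y (m - m')"
      unfolding first_hit_def shift
      using m \<open>m' < m\<close> by (simp add: less_diff_conv)
    then obtain k where k: "first_hit ?\<pi> I y k" "(?\<pi> ^^ k) y = (\<tau> ^^ (m - m')) y"
      using less.IH[of "m - m'" y] \<open>m' \<ge> 1\<close> \<open>m' < m\<close> \<open>y \<in> J\<close> by auto
    have \<pi>_Suc: "(?\<pi> ^^ Suc i) x = (?\<pi> ^^ i) y" for i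
      by (simp only: funpow_Suc_right comp_apply \<pi>x y_def)
    have "(?\<pi> ^^ j) x \<notin> I" if "1 \<le> j" "j < Suc k" for j
    proof -
      have "j = Suc (j - 1)" using that(1) by simp
      then have "(?\<pi> ^^ j) x = (?\<pi> ^^ (j - 1)) y"
        by (metis \<pi>_Suc)
      moreover have "(?\<pi> ^^ (j - 1)) y \<notin> I"
        using k(1) \<open>y \<notin> I\<close> that unfolding first_hit_def
        by (cases "j = 1") (auto dest: spec[of _ "j - 1"])
      ultimately show ?thesis by simp
    qed
    then have "first_hit ?\<pi> I x (Suc k)"
      using k(1) unfolding first_hit_def \<pi>_Suc by auto
    moreover have "(?\<pi> ^^ Suc k) x = (\<tau> ^^ m) x"
      unfolding \<pi>_Suc using k(2) \<open>m' < m\<close> by (simp add: shift)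
    ultimately show ?thesis by blast
  qed
qed

lemma remove_from_cycles_remove_from_cycles:
  assumes "permutation \<tau>" "I \<subseteq> J"
  shows "remove_from_cycles (remove_from_cycles \<tau> J) I = remove_from_cycles \<tau> I"
proof
  fix x
  show "remove_from_cycles (remove_from_cycles \<tau> J) I x = remove_from_cycles \<tau> I x"
  proof (cases "x \<in> I")
    case True
    then have "x \<in> J"
      using assms(2) by blast
    obtain n where "n > 0" "(\<tau> ^^ n) x = x"
      using permutation_self[OF assms(1)] by metis
    then have hit: "first_hit \<tau> I x (hitting_time \<tau> I x)"
      using True by (intro first_hit_hitting_time(1)[of n]) simp_all
    obtain k where "first_hit (remove_from_cycles \<tau> J) I x k"
        "(remove_from_cycles \<tau> J ^^ k) x = (\<tau> ^^ hitting_time \<tau> I x) x"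
      using first_hit_remove_from_cycles[OF assms(2) \<open>x \<in> J\<close> hit] by blast
    then show ?thesis
      using True by (simp add: remove_from_cycles_first_hit remove_from_cycles_hitting_time)
  qed (simp add: remove_from_cycles_def)
qed

lemma remove_from_cycles_permutes_self:
  assumes "\<tau> permutes S"
  shows "remove_from_cycles \<tau> S = \<tau>"
proof
  fix x
  show "remove_from_cycles \<tau> S x = \<tau> x"
  proof (cases "x \<in> S")
    case True
    then have "first_hit \<tau> S x 1"
      using permutes_in_image[OF assms] unfolding first_hit_def by simp
    then show ?thesis
      using remove_from_cycles_first_hit[OF True] by simp
  qed (use assms in \<open>simp add: remove_from_cycles_def permutes_not_in\<close>)
qed

lemma remove_from_cycles_compatible_sequence:
  assumes perm: "\<And>N. N \<ge> 1 \<Longrightarrow> \<sigma> N permutes {1..N}"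
    and compat: "\<And>N. N \<ge> 1 \<Longrightarrow> \<sigma> N = remove_from_cycles (\<sigma> (Suc N)) {1..N}"
    and "1 \<le> N" "N \<le> N'"
  shows "\<sigma> N = remove_from_cycles (\<sigma> N') {1..N}"
  using \<open>N \<le> N'\<close>
proof (induction N' rule: dec_induct)
  case base
  then show ?case
    using remove_from_cycles_permutes_self[OF perm[OF \<open>1 \<le> N\<close>]] by simp
next
  case (step M)
  have "permutation (\<sigma> (Suc M))"
    using perm[of "Suc M"] by (auto simp: permutation_permutes)
  then have "remove_from_cycles (\<sigma> (Suc M)) {1..N}
      = remove_from_cycles (remove_from_cycles (\<sigma> (Suc M)) {1..M}) {1..N}"
    using step.hyps(1) by (simp add: remove_from_cycles_remove_from_cycles)
  also have "\<dots> = remove_from_cycles (\<sigma> M) {1..N}"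
    using compat[of M] step.hyps(1) \<open>1 \<le> N\<close> by simp
  finally show ?case
    using step.IH by simp
qed

theorem proposition2p1:
  fixes \<sigma> :: "nat \<Rightarrow> nat \<Rightarrow> nat"
  assumes perm: "\<And>N. N \<ge> 1 \<Longrightarrow> \<sigma> N permutes {1..N}"
    and compat: "\<And>N. N \<ge> 1 \<Longrightarrow> \<sigma> N = remove_from_cycles (\<sigma> (Suc N)) {1..N}"
  shows "(\<forall>I N N'. N \<ge> 1 \<and> N' \<ge> 1 \<and> I \<subseteq> {1..N} \<and> I \<subseteq> {1..N'} \<longrightarrow>
            remove_from_cycles (\<sigma> N) I = remove_from_cycles (\<sigma> N') I)
       \<and> (\<forall>I J N. N \<ge> 1 \<and> I \<subseteq> J \<and> J \<subseteq> {1..N} \<longrightarrow>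
            remove_from_cycles (\<sigma> N) I
              = remove_from_cycles (remove_from_cycles (\<sigma> N) J) I)"
proof -
  have permutation: "permutation (\<sigma> N)" if "N \<ge> 1" for N
    using perm[OF that] by (auto simp: permutation_permutes)
  have independent: "remove_from_cycles (\<sigma> N) I = remove_from_cycles (\<sigma> N') I"
    if "1 \<le> N" "N \<le> N'" "I \<subseteq> {1..N}" for I N N'
    using remove_from_cycles_compatible_sequence[OF perm compat that(1,2)]
      remove_from_cycles_remove_from_cycles[OF permutation that(3)] that(1,2) by simp
  show ?thesis
  proof (intro conjI allI impI)
    fix I :: "nat set" and N N' :: nat
    assume "N \<ge> 1 \<and> N' \<ge> 1 \<and> I \<subseteq> {1..N} \<and> I \<subseteq> {1..N'}"
    then show "remove_from_cycles (\<sigma> N) I = remove_from_cycles (\<sigma> N') I"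
      using independent[of N N' I] independent[of N' N I] nle_le by metis
  next
    fix I J :: "nat set" and N :: nat
    assume "N \<ge> 1 \<and> I \<subseteq> J \<and> J \<subseteq> {1..N}"
    then show "remove_from_cycles (\<sigma> N) I = remove_from_cycles (remove_from_cycles (\<sigma> N) J) I"
      using remove_from_cycles_remove_from_cycles[OF permutation] by simp
  qed
qed

end
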